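(* Let $\mathbf{T}$ be a totally ordered set, $\Bbbk$ a field, and let $F:\mathbb{U}\to\mathbb{V}$, $G:\mathbb{T}'\to\mathbb{W}$, $\varphi_1:\mathbb{T}'\to\mathbb{U}$, $\varphi_2:\mathbb{V}\to\mathbb{W}$ be homomorphisms of pointwise finite-dimensional $\mathbf{T}$-persistence modules with $G=\varphi_2\circ F\circ\varphi_1$. Let $F_\varphi:=F|_{\mathrm{im}\,\varphi_1}:\mathrm{im}\,\varphi_1\to\mathrm{im}\,F$, $\varphi_F:=\varphi_2|_{\mathrm{im}\,F}:\mathrm{im}\,F\to\mathrm{im}\,\varphi_2$, and $\varphi_*:=\varphi_2|_{\mathrm{im}\,F_\varphi}:\mathrm{im}\,F_\varphi\to\mathrm{im}\,\varphi_F$ (so $\mathrm{im}\,\varphi_*=\mathrm{im}\,G$). Define the matchings \[\mathcal{M}_\varphi:=\mathcal{J}_{F_\varphi}\circ\overline{\mathcal{Q}_{\varphi_*}}:\mathcal{B}_G\nrightarrow\mathcal{B}_F,\qquad \mathcal{E}_\varphi:=\overline{\mathcal{J}_{\varphi_*}}\circ\mathcal{Q}_{\varphi_F}:\mathcal{B}_F\nrightarrow\mathcal{B}_G.\] Then $\mathcal{M}_\varphi$ and $\overline{\mathcal{E}_\varphi}$ are injective sub-barcode matchings $\mathcal{B}_G\nrightarrow\mathcal{B}_F$.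
   Context: Persistence modules, p.f.d., intervals (nonempty convex subsets of $\mathbf{T}$), barcodes $\mathcal{B}_\mathbb{V}:\mathrm{Rep}(\mathcal{B}_\mathbb{V})\to\mathcal{I}_{\mathbf{T}}$ of p.f.d. modules (from the interval decomposition $\mathbb{V}\cong\bigoplus_\beta\Bbbk_{\mathcal{B}_\mathbb{V}(\beta)}$), and $\mathcal{B}_H:=\mathcal{B}_{\mathrm{im}\,H}$ for a homomorphism $H$, are as usual. A matching is a relation in which each element is related to at most one element; a barcode matching $M:\mathcal{A}\nrightarrow\mathcal{B}$ is a matching $M\subseteq\mathrm{Rep}(\mathcal{A})\times\mathrm{Rep}(\mathcal{B})$ with $\mathcal{A}(\alpha)\cap\mathcal{B}(\beta)\neq\emptyset$ for matched pairs. Composition of barcode matchings is $N\circ M=\{(\alpha,\gamma):\exists\beta,(\alpha,\beta)\in M,(\beta,\gamma)\in N,\ \mathcal{A}(\alpha)\cap\mathcal{C}(\gamma)\neq\emptyset\}$. The reverse of a relation $R$ is $\overline{R}=\{(b,a):(a,b)\in R\}$. A matching is injective if every bar of the domain is matched; a sub-barcode matching satisfies $\mathcal{A}(\alpha)\subseteq\mathcal{B}(\beta)$ for all matched pairs. For a homomorphism $H$ with epi–mono factorization $\mathrm{dom}\,H\xrightarrow{q_H}\mathrm{im}\,H\xrightarrow{j_H}\mathrm{cod}\,H$, $\mathcal{J}_H$ and $\mathcal{Q}_H$ denote the Bauer–Lesnick induced matchings of $j_H$ and $q_H$: for a monomorphism $m:\mathbb{X}\hookrightarrow\mathbb{Y}$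 of p.f.d. $\mathbf{T}$-modules, $\mathcal{J}(m):\mathcal{B}_\mathbb{X}\nrightarrow\mathcal{B}_\mathbb{Y}$ is obtained by grouping bars according to the upper end of their interval, ordering the bars with a given upper end in each barcode by decreasing interval (by inclusion), and matching the $i$-th bar of $\mathcal{B}_\mathbb{X}$ to the $i$-th bar of $\mathcal{B}_\mathbb{Y}$; dually, for an epimorphism $e:\mathbb{X}\twoheadrightarrow\mathbb{Y}$, $\mathcal{Q}(e)$ groups bars by lower end, orders by decreasing interval, and matches $i$-th to $i$-th. These are canonical (depending only on the existence of the mono/epi), $\mathcal{J}(m)$ is injective with $\mathcal{B}_\mathbb{X}(\alpha)\subseteq\mathcal{B}_\mathbb{Y}(\beta)$ for matched pairs, and $\mathcal{Q}(e)$ is coinjective (every bar of $\mathcal{B}_\mathbb{Y}$ matched) with $\mathcal{B}_\mathbb{X}(\alpha)\supseteq\mathcal{B}_\mathbb{Y}(\beta)$ for matched pairs. *)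

theory Defs
  imports Complex_Main
begin

text \<open>A T-persistence module over the field 'k is represented concretely by
  a family of subspaces V t of an ambient 'k-vector space (type 'v with scalar
  multiplication sc) together with structure maps f s t : V s \<rightarrow> V t for s \<le> t.
  Values of the maps outside the carriers are irrelevant.\<close>

definition pers_module ::
  "('k::field \<Rightarrow> 'v::ab_group_add \<Rightarrow> 'v) \<Rightarrow> ('t::linorder \<Rightarrow> 'v set) \<Rightarrow> ('t \<Rightarrow> 't \<Rightarrow> 'v \<Rightarrow> 'v) \<Rightarrow> bool"
where
  "pers_module sc V f \<longleftrightarrow>
     vector_space sc \<and>
     (\<forall>t. module.subspace sc (V t)) \<and>
     (\<forall>s t. s \<le> t \<longrightarrow>
        (\<forall>x\<in>V s. f s t x \<in> V t) \<and>
        (\<forall>x\<in>V s. \<forall>y\<in>V s. f s t (x + y) = f s t x + f s t y) \<and>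
        (\<forall>c. \<forall>x\<in>V s. f s t (sc c x) = sc c (f s t x))) \<and>
     (\<forall>t. \<forall>x\<in>V t. f t t x = x) \<and>
     (\<forall>s t u. s \<le> t \<longrightarrow> t \<le> u \<longrightarrow> (\<forall>x\<in>V s. f s u x = f t u (f s t x)))"

definition pfd :: "('k::field \<Rightarrow> 'v::ab_group_add \<Rightarrow> 'v) \<Rightarrow> ('t \<Rightarrow> 'v set) \<Rightarrow> bool" where
  "pfd sc V \<longleftrightarrow> (\<forall>t. \<exists>B. finite B \<and> B \<subseteq> V t \<and> module.span sc B = V t)"

definition pm_hom ::
  "('k::field \<Rightarrow> 'v::ab_group_add \<Rightarrow> 'v) \<Rightarrow> ('t::linorder \<Rightarrow> 'v set) \<Rightarrow> ('t \<Rightarrow> 't \<Rightarrow> 'v \<Rightarrow> 'v) \<Rightarrow>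
   ('k \<Rightarrow> 'w::ab_group_add \<Rightarrow> 'w) \<Rightarrow> ('t \<Rightarrow> 'w set) \<Rightarrow> ('t \<Rightarrow> 't \<Rightarrow> 'w \<Rightarrow> 'w) \<Rightarrow>
   ('t \<Rightarrow> 'v \<Rightarrow> 'w) \<Rightarrow> bool"
where
  "pm_hom scV V f scW W g H \<longleftrightarrow>
     pers_module scV V f \<and> pers_module scW W g \<and>
     (\<forall>t. \<forall>x\<in>V t. H t x \<in> W t) \<and>
     (\<forall>t. \<forall>x\<in>V t. \<forall>y\<in>V t. H t (x + y) = H t x + H t y) \<and>
     (\<forall>t c. \<forall>x\<in>V t. H t (scV c x) = scW c (H t x)) \<and>
     (\<forall>s t. s \<le> t \<longrightarrow> (\<forall>x\<in>V s. H t (f s t x) = g s t (H s x)))"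

text \<open>Carriers of the image submodule im H of a homomorphism H with domain carriers V
  (the image is a submodule of the codomain, with the codomain's structure maps).
  Thus for a homomorphism H and a submodule given by carriers X of its domain,
  img H X is the image of the restriction of H to X.\<close>
definition img :: "('t \<Rightarrow> 'v \<Rightarrow> 'w) \<Rightarrow> ('t \<Rightarrow> 'v set) \<Rightarrow> 't \<Rightarrow> 'w set" where
  "img H V t = H t ` V t"

definition interval :: "'t::linorder set \<Rightarrow> bool" where
  "interval I \<longleftrightarrow> I \<noteq> {} \<and> (\<forall>x\<in>I. \<forall>z\<in>I. \<forall>y. x \<le> y \<and> y \<le> z \<longrightarrow> y \<in> I)"

text \<open>(R, I) is a barcode of (V,f): there is an isomorphism from the direct sum of the
  interval modules k_{I \<beta>}, \<beta> \<in> R, onto V.\<close>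
definition is_barcode ::
  "('k::field \<Rightarrow> 'v::ab_group_add \<Rightarrow> 'v) \<Rightarrow> ('t::linorder \<Rightarrow> 'v set) \<Rightarrow> ('t \<Rightarrow> 't \<Rightarrow> 'v \<Rightarrow> 'v) \<Rightarrow>
   'r set \<Rightarrow> ('r \<Rightarrow> 't set) \<Rightarrow> bool"
where
  "is_barcode sc V f R I \<longleftrightarrow>
     (\<forall>\<beta>\<in>R. interval (I \<beta>)) \<and>
     (\<exists>e :: 'r \<Rightarrow> 't \<Rightarrow> 'v.
        (\<forall>\<beta>\<in>R. \<forall>t\<in>I \<beta>. e \<beta> t \<in> V t) \<and>
        (\<forall>\<beta>\<in>R. \<forall>s t. s \<le> t \<longrightarrow> s \<in> I \<beta> \<longrightarrow>
            f s t (e \<beta> s) = (if t \<in> I \<beta> then e \<beta> t else 0)) \<and>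
        (\<forall>t. inj_on (\<lambda>\<beta>. e \<beta> t) {\<beta>\<in>R. t \<in> I \<beta>} \<and>
             \<not> module.dependent sc ((\<lambda>\<beta>. e \<beta> t) ` {\<beta>\<in>R. t \<in> I \<beta>}) \<and>
             module.span sc ((\<lambda>\<beta>. e \<beta> t) ` {\<beta>\<in>R. t \<in> I \<beta>}) = V t))"

definition barcode_matching ::
  "'a set \<Rightarrow> ('a \<Rightarrow> 't set) \<Rightarrow> 'b set \<Rightarrow> ('b \<Rightarrow> 't set) \<Rightarrow> ('a \<times> 'b) set \<Rightarrow> bool" where
  "barcode_matching RA A RB B M \<longleftrightarrow>
     M \<subseteq> RA \<times> RB \<and>
     (\<forall>a b b'. (a, b) \<in> M \<longrightarrow> (a, b') \<in> M \<longrightarrow> b = b') \<and>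
     (\<forall>a a' b. (a, b) \<in> M \<longrightarrow> (a', b) \<in> M \<longrightarrow> a = a') \<and>
     (\<forall>(a, b)\<in>M. A a \<inter> B b \<noteq> {})"

definition injective_matching ::
  "'a set \<Rightarrow> ('a \<Rightarrow> 't set) \<Rightarrow> 'b set \<Rightarrow> ('b \<Rightarrow> 't set) \<Rightarrow> ('a \<times> 'b) set \<Rightarrow> bool" where
  "injective_matching RA A RB B M \<longleftrightarrow>
     barcode_matching RA A RB B M \<and> (\<forall>a\<in>RA. \<exists>b. (a, b) \<in> M)"

definition sub_barcode_matching ::
  "'a set \<Rightarrow> ('a \<Rightarrow> 't set) \<Rightarrow> 'b set \<Rightarrow> ('b \<Rightarrow> 't set) \<Rightarrow> ('a \<times> 'b) set \<Rightarrow> bool" where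
  "sub_barcode_matching RA A RB B M \<longleftrightarrow>
     barcode_matching RA A RB B M \<and> (\<forall>(a, b)\<in>M. A a \<subseteq> B b)"

text \<open>Composition N \<circ> M of barcode matchings M : A \<nrightarrow> B and N : B \<nrightarrow> C.\<close>
definition comp_match ::
  "('a \<Rightarrow> 't set) \<Rightarrow> ('c \<Rightarrow> 't set) \<Rightarrow> ('a \<times> 'b) set \<Rightarrow> ('b \<times> 'c) set \<Rightarrow> ('a \<times> 'c) set" where
  "comp_match A C M N = {(a, c). \<exists>b. (a, b) \<in> M \<and> (b, c) \<in> N \<and> A a \<inter> C c \<noteq> {}}"

text \<open>Upper end of an interval (its down-closure) and lower end (its up-closure);
  these distinguish e.g. [0,1] from [0,1).\<close>
definition upper_end :: "'t::linorder set \<Rightarrow> 't set" where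
  "upper_end I = {t. \<exists>s\<in>I. t \<le> s}"

definition lower_end :: "'t::linorder set \<Rightarrow> 't set" where
  "lower_end I = {t. \<exists>s\<in>I. s \<le> t}"

definition decreasing_enum :: "('r \<Rightarrow> 't set) \<Rightarrow> 'r set \<Rightarrow> ('r \<Rightarrow> nat) \<Rightarrow> bool" where
  "decreasing_enum I S r \<longleftrightarrow>
     inj_on r S \<and> (\<forall>\<beta>\<in>S. \<forall>m < r \<beta>. m \<in> r ` S) \<and>
     (\<forall>\<beta>\<in>S. \<forall>\<beta>'\<in>S. I \<beta>' \<subset> I \<beta> \<longrightarrow> r \<beta> < r \<beta>')"

definition grouped_matching ::
  "('t set \<Rightarrow> 't set) \<Rightarrow> 'a set \<Rightarrow> ('a \<Rightarrow> 't set) \<Rightarrow> 'b set \<Rightarrow> ('b \<Rightarrow> 't set) \<Rightarrow> ('a \<times> 'b) set \<Rightarrow> bool"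
where
  "grouped_matching endp RA A RB B M \<longleftrightarrow>
     (\<exists>rA rB.
        (\<forall>E. decreasing_enum A {a\<in>RA. endp (A a) = E} rA \<and>
             decreasing_enum B {b\<in>RB. endp (B b) = E} rB) \<and>
        M = {(a, b). a \<in> RA \<and> b \<in> RB \<and> endp (A a) = endp (B b) \<and> rA a = rB b})"

text \<open>Induced matching J(m) of a monomorphism (group by upper end) and Q(e) of an
  epimorphism (group by lower end), as combinatorial rules on the barcodes.\<close>
definition mono_induced_matching ::
  "'a set \<Rightarrow> ('a \<Rightarrow> 't::linorder set) \<Rightarrow> 'b set \<Rightarrow> ('b \<Rightarrow> 't set) \<Rightarrow> ('a \<times> 'b) set \<Rightarrow> bool" where
  "mono_induced_matching = grouped_matching upper_end"

definition epi_induced_matching ::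
  "'a set \<Rightarrow> ('a \<Rightarrow> 't::linorder set) \<Rightarrow> 'b set \<Rightarrow> ('b \<Rightarrow> 't set) \<Rightarrow> ('a \<times> 'b) set \<Rightarrow> bool" where
  "epi_induced_matching = grouped_matching lower_end"

end

theory Submission
  imports Defs
begin

text \<open>Both matchings are composites of injective sub-barcode matchings, namely of the induced
  matching of a monomorphism and the reverse of the induced matching of an epimorphism, and such
  matchings compose because bars are nonempty. Within a group of bars with a common end the bars
  are nested and are matched in order of decreasing size, so the i-th bar of the smaller barcode
  lies in the i-th bar of the larger one as soon as, for every point t, the group of the smaller
  barcode has at most as many bars through t. These counts (Bauer and Lesnick) are proved in the
  interval bases at a suitably chosen point s: for a submodule, s lies beyond t but before the
  death of every bar through t that dies too early; for an image, s lies before t but after the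
  birth of every bar through t that is born too late.\<close>

section \<open>Linear maps on subspaces\<close>

definition linear_on ::
  "('k::field \<Rightarrow> 'a::ab_group_add \<Rightarrow> 'a) \<Rightarrow> ('k \<Rightarrow> 'b::ab_group_add \<Rightarrow> 'b) \<Rightarrow> 'a set \<Rightarrow> ('a \<Rightarrow> 'b) \<Rightarrow> bool"
where
  "linear_on s1 s2 S g \<longleftrightarrow>
     (\<forall>x\<in>S. \<forall>y\<in>S. g (x + y) = g x + g y) \<and> (\<forall>c. \<forall>x\<in>S. g (s1 c x) = s2 c (g x))"

lemma linear_on_subset: "linear_on s1 s2 S g \<Longrightarrow> T \<subseteq> S \<Longrightarrow> linear_on s1 s2 T g"
  unfolding linear_on_def by blast

context
  fixes s1 :: "'k::field \<Rightarrow> 'a::ab_group_add \<Rightarrow> 'a" and s2 :: "'k \<Rightarrow> 'b::ab_group_add \<Rightarrow> 'b"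
  assumes vs1: "vector_space s1" and vs2: "vector_space s2"
begin

interpretation v1: vector_space s1 by (rule vs1)
interpretation v2: vector_space s2 by (rule vs2)

lemma linear_on_span_0:
  assumes "linear_on s1 s2 (v1.span B) g"
  shows "g 0 = 0"
proof -
  have "g (0 + 0) = g 0 + g 0"
    using assms v1.span_zero unfolding linear_on_def by blast
  then show ?thesis by simp
qed

lemma linear_on_span_image:
  assumes g: "linear_on s1 s2 (v1.span B) g" and x: "x \<in> v1.span B"
  shows "g x \<in> v2.span (g ` B)"
proof -
  have "x \<in> v1.span B \<and> g x \<in> v2.span (g ` B)"
    using x
  proof (induction rule: v1.span_induct_alt)
    case base
    then show ?case using linear_on_span_0[OF g] v1.span_zero v2.span_zero by simp
  next
    case (step c b y)
    then have "s1 c b \<in> v1.span B"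
      by (simp add: v1.span_base v1.span_scale)
    with g step have "g (s1 c b + y) = s2 c (g b) + g y"
      unfolding linear_on_def by (simp add: v1.span_base)
    then show ?case
      using step \<open>s1 c b \<in> v1.span B\<close> by (auto intro: v1.span_add v2.span_add v2.span_scale v2.span_base)
  qed
  then show ?thesis ..
qed

lemma linear_on_span_sum:
  assumes g: "linear_on s1 s2 (v1.span B) g" and "finite J" and "\<forall>j\<in>J. v j \<in> B"
  shows "g (\<Sum>j\<in>J. s1 (c j) (v j)) = (\<Sum>j\<in>J. s2 (c j) (g (v j)))"
  using assms(2,3)
proof (induction J rule: finite_induct)
  case empty
  then show ?case using linear_on_span_0[OF g] by simp
next
  case (insert j J)
  have vj: "v j \<in> v1.span B" and sum: "(\<Sum>i\<in>J. s1 (c i) (v i)) \<in> v1.span B"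
    using insert by (auto intro: v1.span_sum v1.span_scale v1.span_base)
  have "g (\<Sum>i\<in>insert j J. s1 (c i) (v i)) = g (s1 (c j) (v j) + (\<Sum>i\<in>J. s1 (c i) (v i)))"
    using insert by simp
  also have "\<dots> = s2 (c j) (g (v j)) + g (\<Sum>i\<in>J. s1 (c i) (v i))"
    using g vj sum v1.span_scale[OF vj] unfolding linear_on_def by metis
  finally show ?case using insert by simp
qed

text \<open>A local form of \<open>linear_indep_image_lemma\<close>, for maps that are linear only on the span of B.\<close>
lemma linear_on_span_eq_0:
  assumes g: "linear_on s1 s2 (v1.span B) g" and fin: "finite B" and inj: "inj_on g B"
    and ind: "v2.independent (g ` B)" and x: "x \<in> v1.span B" and gx: "g x = 0"
  shows "x = 0"
proof -
  obtain u where xu: "x = (\<Sum>b\<in>B. s1 (u b) b)"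
    using x v1.span_finite[OF fin] by auto
  have "(\<Sum>w\<in>g ` B. s2 (u (the_inv_into B g w)) w) = (\<Sum>b\<in>B. s2 (u b) (g b))"
    using inj by (simp add: sum.reindex the_inv_into_f_f)
  also have "\<dots> = 0"
    using gx linear_on_span_sum[OF g fin, of id u] unfolding xu by simp
  finally have z: "(\<Sum>w\<in>g ` B. s2 (u (the_inv_into B g w)) w) = 0" .
  have "u b = 0" if "b \<in> B" for b
    using v2.independentD[OF ind finite_imageI[OF fin] order_refl z, of "g b"] that inj
    by (simp add: the_inv_into_f_f)
  then show ?thesis unfolding xu by simp
qed

end

section \<open>Ends of intervals\<close>

lemma upper_end_downward: "x \<in> upper_end I \<Longrightarrow> y \<le> x \<Longrightarrow> y \<in> upper_end I"
  unfolding upper_end_def by (auto intro: order_trans)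

lemma lower_end_upward: "x \<in> lower_end I \<Longrightarrow> x \<le> y \<Longrightarrow> y \<in> lower_end I"
  unfolding lower_end_def by (auto intro: order_trans)

lemma subset_upper_end: "I \<subseteq> upper_end I"
  unfolding upper_end_def by auto

lemma subset_lower_end: "I \<subseteq> lower_end I"
  unfolding lower_end_def by auto

lemma interval_upper_end_mem: "interval I \<Longrightarrow> t \<in> I \<Longrightarrow> t \<le> s \<Longrightarrow> s \<in> upper_end I \<Longrightarrow> s \<in> I"
  unfolding upper_end_def interval_def by blast

lemma interval_lower_end_mem: "interval I \<Longrightarrow> t \<in> I \<Longrightarrow> s \<le> t \<Longrightarrow> s \<in> lower_end I \<Longrightarrow> s \<in> I"
  unfolding lower_end_def interval_def by blast

lemma interval_upper_end_eq_nested: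
  assumes "interval I" "interval J" "upper_end I = upper_end J"
  shows "I \<subseteq> J \<or> J \<subseteq> I"
proof (rule ccontr)
  assume "\<not> ?thesis"
  then obtain x y where x: "x \<in> I" "x \<notin> J" and y: "y \<in> J" "y \<notin> I" by blast
  have "x \<in> upper_end J" "y \<in> upper_end I"
    using x(1) y(1) subset_upper_end assms(3) by blast+
  then show False
    using interval_upper_end_mem[OF assms(1) x(1), of y] interval_upper_end_mem[OF assms(2) y(1), of x]
      x(2) y(2) by (cases x y rule: le_cases) auto
qed

lemma interval_lower_end_eq_nested:
  assumes "interval I" "interval J" "lower_end I = lower_end J"
  shows "I \<subseteq> J \<or> J \<subseteq> I"
proof (rule ccontr)
  assume "\<not> ?thesis"
  then obtain x y where x: "x \<in> I" "x \<notin> J" and y: "y \<in> J" "y \<notin> I" by blast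
  have "x \<in> lower_end J" "y \<in> lower_end I"
    using x(1) y(1) subset_lower_end assms(3) by blast+
  then show False
    using interval_lower_end_mem[OF assms(1) x(1), of y] interval_lower_end_mem[OF assms(2) y(1), of x]
      x(2) y(2) by (cases x y rule: le_cases) auto
qed

lemma exists_above_outside_upper_ends:
  assumes "finite K" "t \<in> E" "\<forall>k\<in>K. \<not> E \<subseteq> upper_end (I k)"
  shows "\<exists>s\<in>E. t \<le> s \<and> (\<forall>k\<in>K. s \<notin> upper_end (I k))"
proof -
  have "\<forall>k\<in>K. \<exists>p. p \<in> E \<and> p \<notin> upper_end (I k)"
    using assms(3) by blast
  then obtain p where p: "\<forall>k\<in>K. p k \<in> E \<and> p k \<notin> upper_end (I k)"
    by metis
  define s where "s = Max (insert t (p ` K))"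
  have "s \<in> insert t (p ` K)" "t \<le> s" "\<forall>k\<in>K. p k \<le> s"
    unfolding s_def using assms(1) Max_in[of "insert t (p ` K)"] by auto
  then show ?thesis
    using assms(2) p upper_end_downward by blast
qed

lemma exists_below_outside_lower_ends:
  assumes "finite K" "t \<in> L" "\<forall>k\<in>K. \<not> L \<subseteq> lower_end (I k)"
  shows "\<exists>s\<in>L. s \<le> t \<and> (\<forall>k\<in>K. s \<notin> lower_end (I k))"
proof -
  have "\<forall>k\<in>K. \<exists>p. p \<in> L \<and> p \<notin> lower_end (I k)"
    using assms(3) by blast
  then obtain p where p: "\<forall>k\<in>K. p k \<in> L \<and> p k \<notin> lower_end (I k)"
    by metis
  define s where "s = Min (insert t (p ` K))"
  have "s \<in> insert t (p ` K)" "s \<le> t" "\<forall>k\<in>K. s \<le> p k"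
    unfolding s_def using assms(1) Min_in[of "insert t (p ` K)"] by auto
  then show ?thesis
    using assms(2) p lower_end_upward by blast
qed

lemma exists_outside_in_upper_ends:
  assumes "finite K" "K \<noteq> {}" "\<forall>k\<in>K. \<not> upper_end (I k) \<subseteq> E"
  shows "\<exists>u. u \<notin> E \<and> (\<forall>k\<in>K. u \<in> upper_end (I k))"
proof -
  have "\<forall>k\<in>K. \<exists>q. q \<in> upper_end (I k) \<and> q \<notin> E"
    using assms(3) by blast
  then obtain q where q: "\<forall>k\<in>K. q k \<in> upper_end (I k) \<and> q k \<notin> E"
    by metis
  define u where "u = Min (q ` K)"
  have "u \<in> q ` K" "\<forall>k\<in>K. u \<le> q k"
    unfolding u_def using assms(1,2) by auto
  then show ?thesis
    using q upper_end_downward by blast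
qed

section \<open>Interval bases\<close>

definition bars_through :: "('t set \<Rightarrow> 't set) \<Rightarrow> 'r set \<Rightarrow> ('r \<Rightarrow> 't set) \<Rightarrow> 't set \<Rightarrow> 't \<Rightarrow> 'r set"
  where "bars_through endp R I E t = {\<beta>\<in>R. endp (I \<beta>) = E \<and> t \<in> I \<beta>}"

text \<open>The data of \<open>is_barcode\<close> with the basis e as a parameter, together with what the ambient
  pointwise finite-dimensional module provides: structure maps linear on X and finitely many
  bars through each point.\<close>
locale barcode_basis = vector_space sc
  for sc :: "'k::field \<Rightarrow> 'v::ab_group_add \<Rightarrow> 'v" +
  fixes X :: "'t::linorder \<Rightarrow> 'v set" and f :: "'t \<Rightarrow> 't \<Rightarrow> 'v \<Rightarrow> 'v"
    and R :: "'r set" and I :: "'r \<Rightarrow> 't set" and e :: "'r \<Rightarrow> 't \<Rightarrow> 'v"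
  assumes linear_on_structure_map: "s \<le> u \<Longrightarrow> linear_on sc sc (X s) (f s u)"
    and interval_bar: "\<beta> \<in> R \<Longrightarrow> interval (I \<beta>)"
    and structure_map_basis:
      "\<beta> \<in> R \<Longrightarrow> s \<le> u \<Longrightarrow> s \<in> I \<beta> \<Longrightarrow> f s u (e \<beta> s) = (if u \<in> I \<beta> then e \<beta> u else 0)"
    and inj_on_basis: "inj_on (\<lambda>\<beta>. e \<beta> t) {\<beta>\<in>R. t \<in> I \<beta>}"
    and independent_basis: "independent ((\<lambda>\<beta>. e \<beta> t) ` {\<beta>\<in>R. t \<in> I \<beta>})"
    and span_basis: "span ((\<lambda>\<beta>. e \<beta> t) ` {\<beta>\<in>R. t \<in> I \<beta>}) = X t"
    and finite_bars_at: "finite {\<beta>\<in>R. t \<in> I \<beta>}"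
begin

lemma vector_space: "vector_space sc"
  by (rule vector_space_axioms)

lemma bar_nonempty: "\<beta> \<in> R \<Longrightarrow> I \<beta> \<noteq> {}"
  using interval_bar[of \<beta>] unfolding interval_def by simp

lemma basis_mem:
  assumes "\<beta> \<in> R" "t \<in> I \<beta>"
  shows "e \<beta> t \<in> X t"
proof -
  have "e \<beta> t \<in> (\<lambda>\<beta>. e \<beta> t) ` {\<beta>\<in>R. t \<in> I \<beta>}"
    using assms by simp
  then show ?thesis
    using span_base span_basis[of t] by metis
qed

lemma structure_map_mem_span:
  assumes "t \<le> s" and "x \<in> X t"
  shows "f t s x \<in> span ((\<lambda>\<beta>. e \<beta> s) ` {\<beta>\<in>R. t \<in> I \<beta> \<and> s \<in> I \<beta>})"
proof -
  have lin: "linear_on sc sc (span ((\<lambda>\<beta>. e \<beta> t) ` {\<beta>\<in>R. t \<in> I \<beta>})) (f t s)"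
    using linear_on_structure_map[OF assms(1)] span_basis[of t] by simp
  have "x \<in> span ((\<lambda>\<beta>. e \<beta> t) ` {\<beta>\<in>R. t \<in> I \<beta>})"
    using assms(2) span_basis[of t] by simp
  then have "f t s x \<in> span (f t s ` (\<lambda>\<beta>. e \<beta> t) ` {\<beta>\<in>R. t \<in> I \<beta>})"
    by (rule linear_on_span_image[OF vector_space vector_space lin])
  also have "\<dots> \<subseteq> span (insert 0 ((\<lambda>\<beta>. e \<beta> s) ` {\<beta>\<in>R. t \<in> I \<beta> \<and> s \<in> I \<beta>}))"
  proof (rule span_mono, rule subsetI)
    fix y assume "y \<in> f t s ` (\<lambda>\<beta>. e \<beta> t) ` {\<beta>\<in>R. t \<in> I \<beta>}"
    then obtain \<beta> where "\<beta> \<in> R" "t \<in> I \<beta>" "y = f t s (e \<beta> t)" by blast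
    then show "y \<in> insert 0 ((\<lambda>\<beta>. e \<beta> s) ` {\<beta>\<in>R. t \<in> I \<beta> \<and> s \<in> I \<beta>})"
      using structure_map_basis[of \<beta> t s] assms(1) by (cases "s \<in> I \<beta>") auto
  qed
  finally show ?thesis
    by (simp only: span_insert_0)
qed

lemma linear_on_span_basis:
  assumes "s \<le> u" and "S \<subseteq> {\<beta>\<in>R. s \<in> I \<beta>}"
  shows "linear_on sc sc (span ((\<lambda>\<beta>. e \<beta> s) ` S)) (f s u)"
proof (rule linear_on_subset[OF linear_on_structure_map[OF assms(1)]])
  have "(\<lambda>\<beta>. e \<beta> s) ` S \<subseteq> (\<lambda>\<beta>. e \<beta> s) ` {\<beta>\<in>R. s \<in> I \<beta>}"
    using assms(2) by auto
  then show "span ((\<lambda>\<beta>. e \<beta> s) ` S) \<subseteq> X s"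
    using span_mono span_basis[of s] by metis
qed

lemma structure_map_eq_0_on_surviving_bars:
  assumes su: "s \<le> u" and S: "S \<subseteq> {\<beta>\<in>R. s \<in> I \<beta> \<and> u \<in> I \<beta>}"
    and x: "x \<in> span ((\<lambda>\<beta>. e \<beta> s) ` S)" and fx: "f s u x = 0"
  shows "x = 0"
proof -
  have Su: "S \<subseteq> {\<beta>\<in>R. u \<in> I \<beta>}" and Ss: "S \<subseteq> {\<beta>\<in>R. s \<in> I \<beta>}"
    using S by auto
  have shift: "f s u (e \<beta> s) = e \<beta> u" if "\<beta> \<in> S" for \<beta>
  proof -
    have "\<beta> \<in> R" "s \<in> I \<beta>" "u \<in> I \<beta>"
      using that S by auto
    then show ?thesis
      using structure_map_basis[OF _ su] by simp
  qed
  then have image: "f s u ` (\<lambda>\<beta>. e \<beta> s) ` S = (\<lambda>\<beta>. e \<beta> u) ` S"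
    by (simp add: image_image)
  have "inj_on (f s u) ((\<lambda>\<beta>. e \<beta> s) ` S)"
  proof (rule inj_onI)
    fix y z assume "y \<in> (\<lambda>\<beta>. e \<beta> s) ` S" "z \<in> (\<lambda>\<beta>. e \<beta> s) ` S" "f s u y = f s u z"
    then obtain \<beta> \<gamma> where "\<beta> \<in> S" "\<gamma> \<in> S" "y = e \<beta> s" "z = e \<gamma> s" "e \<beta> u = e \<gamma> u"
      using shift by auto
    then show "y = z"
      using inj_onD[OF inj_on_basis[of u]] Su by blast
  qed
  moreover have "independent (f s u ` (\<lambda>\<beta>. e \<beta> s) ` S)"
    unfolding image by (rule independent_mono[OF independent_basis image_mono[OF Su]])
  moreover have "finite ((\<lambda>\<beta>. e \<beta> s) ` S)"
    using finite_subset[OF Ss finite_bars_at] by simp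
  ultimately show "x = 0"
    using linear_on_span_eq_0[OF vector_space vector_space linear_on_span_basis[OF su Ss] _ _ _ x fx]
    by blast
qed

lemma structure_map_kernel:
  assumes su: "s \<le> u" and S: "S \<subseteq> {\<beta>\<in>R. s \<in> I \<beta>}"
    and x: "x \<in> span ((\<lambda>\<beta>. e \<beta> s) ` S)" and fx: "f s u x = 0"
  shows "x \<in> span ((\<lambda>\<beta>. e \<beta> s) ` {\<beta>\<in>S. u \<notin> I \<beta>})"
proof -
  define S0 where "S0 = {\<beta>\<in>S. u \<notin> I \<beta>}"
  define S1 where "S1 = {\<beta>\<in>S. u \<in> I \<beta>}"
  have sub: "S0 \<subseteq> S" "S1 \<subseteq> S"
    unfolding S0_def S1_def by auto
  have "(\<lambda>\<beta>. e \<beta> s) ` S = (\<lambda>\<beta>. e \<beta> s) ` S0 \<union> (\<lambda>\<beta>. e \<beta> s) ` S1"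
    unfolding S0_def S1_def by auto
  then obtain m b where xmb: "x = m + b" and m: "m \<in> span ((\<lambda>\<beta>. e \<beta> s) ` S0)"
    and b: "b \<in> span ((\<lambda>\<beta>. e \<beta> s) ` S1)"
    using x span_Un by auto
  have "f s u ` (\<lambda>\<beta>. e \<beta> s) ` S0 \<subseteq> {0}"
    using S structure_map_basis[OF _ su] unfolding S0_def by auto
  then have "span (f s u ` (\<lambda>\<beta>. e \<beta> s) ` S0) \<subseteq> {0}"
    using span_mono[of _ "{0}"] by simp
  moreover have "f s u m \<in> span (f s u ` (\<lambda>\<beta>. e \<beta> s) ` S0)"
    using linear_on_span_image[OF vector_space vector_space linear_on_span_basis[OF su] m] sub(1) S
    by blast
  ultimately have fm: "f s u m = 0" by blast
  have "m \<in> span ((\<lambda>\<beta>. e \<beta> s) ` S)" "b \<in> span ((\<lambda>\<beta>. e \<beta> s) ` S)"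
    using m b subsetD[OF span_mono[OF image_mono[OF sub(1)]]] subsetD[OF span_mono[OF image_mono[OF sub(2)]]]
    by blast+
  then have fb: "f s u b = 0"
    using fx fm linear_on_span_basis[OF su S] unfolding xmb linear_on_def by (metis add_0)
  have "S1 \<subseteq> {\<beta>\<in>R. s \<in> I \<beta> \<and> u \<in> I \<beta>}"
    using S unfolding S1_def by auto
  then have "b = 0"
    using structure_map_eq_0_on_surviving_bars[OF su _ b fb] by blast
  then show ?thesis
    using xmb m unfolding S0_def by simp
qed

text \<open>Pick u beyond the upper end of J but inside every bar of T that reaches further: then
  f s u kills x and is injective on the basis vectors of those bars.\<close>
lemma mem_span_bars_with_upper_end:
  assumes T: "T \<subseteq> {\<beta>\<in>R. s \<in> I \<beta> \<and> upper_end J \<subseteq> upper_end (I \<beta>)}"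
    and s: "s \<in> upper_end J" and x: "x \<in> span ((\<lambda>\<beta>. e \<beta> s) ` T)"
    and killed: "\<And>u. s \<le> u \<Longrightarrow> u \<notin> upper_end J \<Longrightarrow> f s u x = 0"
  shows "x \<in> span ((\<lambda>\<beta>. e \<beta> s) ` {\<beta>\<in>T. upper_end (I \<beta>) = upper_end J})"
proof (cases "\<forall>\<beta>\<in>T. upper_end (I \<beta>) \<subseteq> upper_end J")
  case True
  then have "{\<beta>\<in>T. upper_end (I \<beta>) = upper_end J} = T"
    using T by auto
  then show ?thesis
    using x by simp
next
  case False
  define long where "long = {\<beta>\<in>T. \<not> upper_end (I \<beta>) \<subseteq> upper_end J}"
  have "finite long"
    by (rule finite_subset[OF _ finite_bars_at[of s]]) (use T in \<open>auto simp: long_def\<close>)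
  moreover have "long \<noteq> {}"
    using False unfolding long_def by auto
  ultimately have "\<exists>u. u \<notin> upper_end J \<and> (\<forall>\<beta>\<in>long. u \<in> upper_end (I \<beta>))"
    by (rule exists_outside_in_upper_ends) (simp add: long_def)
  then obtain u where u: "u \<notin> upper_end J" "\<forall>\<beta>\<in>long. u \<in> upper_end (I \<beta>)"
    by blast
  have su: "s \<le> u"
    using upper_end_downward[OF s, of u] u(1) le_cases[of s u] by blast
  have "T \<subseteq> {\<beta>\<in>R. s \<in> I \<beta>}"
    using T by blast
  then have x_short: "x \<in> span ((\<lambda>\<beta>. e \<beta> s) ` {\<beta>\<in>T. u \<notin> I \<beta>})"
    by (rule structure_map_kernel[OF su _ x killed[OF su u(1)]])
  have "{\<beta>\<in>T. u \<notin> I \<beta>} \<subseteq> {\<beta>\<in>T. upper_end (I \<beta>) = upper_end J}"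
  proof (rule subsetI, rule ccontr)
    fix \<beta> assume \<beta>: "\<beta> \<in> {\<beta>\<in>T. u \<notin> I \<beta>}" and "\<beta> \<notin> {\<beta>\<in>T. upper_end (I \<beta>) = upper_end J}"
    then have "\<beta> \<in> long" "\<beta> \<in> R" "s \<in> I \<beta>"
      using T unfolding long_def by auto
    then have "u \<in> I \<beta>"
      using interval_upper_end_mem[OF interval_bar _ su] u(2) by simp
    then show False
      using \<beta> by simp
  qed
  then show ?thesis
    using subsetD[OF span_mono[OF image_mono] x_short] by blast
qed

lemma finite_bars_through: "finite (bars_through endp R I E t)"
  by (rule finite_subset[OF _ finite_bars_at[of t]]) (auto simp: bars_through_def)

lemma card_le_of_basis_subset_span:
  assumes S: "S \<subseteq> {\<beta>\<in>R. t \<in> I \<beta>}" and "(\<lambda>\<beta>. e \<beta> t) ` S \<subseteq> span T" and "finite T"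
  shows "card S \<le> card T"
proof -
  have "independent ((\<lambda>\<beta>. e \<beta> t) ` S)"
    by (rule independent_mono[OF independent_basis image_mono[OF S]])
  then have "card ((\<lambda>\<beta>. e \<beta> t) ` S) \<le> card T"
    using independent_span_bound assms(2,3) by metis
  moreover have "card ((\<lambda>\<beta>. e \<beta> t) ` S) = card S"
    using card_image inj_on_subset[OF inj_on_basis S] by metis
  ultimately show ?thesis by simp
qed

lemma card_le_of_basis_subset_span_Un:
  assumes S: "S \<subseteq> {\<beta>\<in>R. t \<in> I \<beta>}" and S': "S' \<subseteq> {\<beta>\<in>R. t \<in> I \<beta>}" and "S \<inter> S' = {}"
    and span: "(\<lambda>\<beta>. e \<beta> t) ` S \<subseteq> span (T \<union> (\<lambda>\<beta>. e \<beta> t) ` S')" and "finite T"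
  shows "card S \<le> card T"
proof -
  have fin: "finite S" "finite S'"
    using finite_subset[OF S finite_bars_at] finite_subset[OF S' finite_bars_at] .
  have "(\<lambda>\<beta>. e \<beta> t) ` S' \<subseteq> span (T \<union> (\<lambda>\<beta>. e \<beta> t) ` S')"
    using span_superset[of "T \<union> (\<lambda>\<beta>. e \<beta> t) ` S'"] by blast
  with span have "(\<lambda>\<beta>. e \<beta> t) ` (S \<union> S') \<subseteq> span (T \<union> (\<lambda>\<beta>. e \<beta> t) ` S')"
    unfolding image_Un by (rule Un_least)
  moreover have "S \<union> S' \<subseteq> {\<beta>\<in>R. t \<in> I \<beta>}"
    using S S' by (rule Un_least)
  moreover have "finite (T \<union> (\<lambda>\<beta>. e \<beta> t) ` S')"
    using \<open>finite T\<close> fin(2) by simp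
  ultimately have "card (S \<union> S') \<le> card (T \<union> (\<lambda>\<beta>. e \<beta> t) ` S')"
    by (intro card_le_of_basis_subset_span)
  also have "\<dots> \<le> card T + card S'"
    using card_Un_le[of T "(\<lambda>\<beta>. e \<beta> t) ` S'"] card_image_le[OF fin(2), of "\<lambda>\<beta>. e \<beta> t"]
    by linarith
  finally show ?thesis
    using card_Un_disjoint[OF fin \<open>S \<inter> S' = {}\<close>] by simp
qed

end

lemma pers_module_linear_on: "pers_module sc V f \<Longrightarrow> s \<le> u \<Longrightarrow> linear_on sc sc (V s) (f s u)"
  unfolding pers_module_def linear_on_def by blast

lemma pm_homD:
  assumes "pm_hom scV V f scW W g H"
  shows "pers_module scV V f" "pers_module scW W g" "x \<in> V t \<Longrightarrow> H t x \<in> W t"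
    "linear_on scV scW (V t) (H t)" "s \<le> t \<Longrightarrow> x \<in> V s \<Longrightarrow> H t (f s t x) = g s t (H s x)"
  using assms unfolding pm_hom_def by (simp_all add: linear_on_def)

lemma is_barcode_obtains_basis:
  assumes V: "pers_module sc V f" and pfd: "pfd sc V" and XV: "\<And>t. X t \<subseteq> V t"
    and bar: "is_barcode sc X f R I"
  obtains e where "barcode_basis sc X f R I e"
proof -
  have vs: "vector_space sc"
    using V unfolding pers_module_def by (rule conjunct1)
  interpret vector_space sc by (rule vs)
  have intervals: "\<forall>\<beta>\<in>R. interval (I \<beta>)"
    using bar unfolding is_barcode_def by (rule conjunct1)
  obtain e where maps: "\<forall>\<beta>\<in>R. \<forall>s t. s \<le> t \<longrightarrow> s \<in> I \<beta> \<longrightarrow> f s t (e \<beta> s) = (if t \<in> I \<beta> then e \<beta> t else 0)"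
    and basis: "\<forall>t. inj_on (\<lambda>\<beta>. e \<beta> t) {\<beta>\<in>R. t \<in> I \<beta>} \<and>
       independent ((\<lambda>\<beta>. e \<beta> t) ` {\<beta>\<in>R. t \<in> I \<beta>}) \<and>
       span ((\<lambda>\<beta>. e \<beta> t) ` {\<beta>\<in>R. t \<in> I \<beta>}) = X t"
    using bar unfolding is_barcode_def by (elim conjE exE)
  have finite: "finite {\<beta>\<in>R. t \<in> I \<beta>}" for t
  proof -
    obtain B where B: "finite B" "B \<subseteq> V t" "span B = V t"
      using pfd unfolding pfd_def by blast
    have "(\<lambda>\<beta>. e \<beta> t) ` {\<beta>\<in>R. t \<in> I \<beta>} \<subseteq> span B"
      using span_superset[of "(\<lambda>\<beta>. e \<beta> t) ` {\<beta>\<in>R. t \<in> I \<beta>}"] basis XV[of t] B(3) by simp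
    then have "finite ((\<lambda>\<beta>. e \<beta> t) ` {\<beta>\<in>R. t \<in> I \<beta>})"
      using independent_span_bound[OF B(1)] basis by simp
    then show ?thesis
      using finite_image_iff basis by metis
  qed
  have lin: "linear_on sc sc (X s) (f s u)" if "s \<le> u" for s u
    using linear_on_subset[OF pers_module_linear_on[OF V that] XV] .
  show ?thesis
    by (rule that[of e], intro barcode_basis.intro[OF vs] barcode_basis_axioms.intro)
      (use intervals maps basis finite lin in simp_all)
qed

lemma is_barcode_bar_nonempty:
  assumes "is_barcode sc V f R I" "\<beta> \<in> R"
  shows "I \<beta> \<noteq> {}"
proof -
  have "\<forall>\<beta>\<in>R. interval (I \<beta>)"
    using assms(1) unfolding is_barcode_def by (rule conjunct1)
  then show ?thesis
    using assms(2) unfolding interval_def by blast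
qed

section \<open>Counting bars through a point\<close>

locale barcode_submodule =
  vector_space sc + X: barcode_basis sc X f RA A eA + Y: barcode_basis sc Y f RB B eB
  for sc :: "'k::field \<Rightarrow> 'v::ab_group_add \<Rightarrow> 'v" and X :: "'t::linorder \<Rightarrow> 'v set"
    and f and RA :: "'a set" and A and eA and Y and RB :: "'b set" and B and eB +
  assumes submodule: "X t \<subseteq> Y t"
begin

lemma basis_mem_span_same_upper_end:
  assumes \<alpha>: "\<alpha> \<in> RA" "t \<in> A \<alpha>" "s \<in> A \<alpha>" "t \<le> s"
    and reach: "\<And>\<beta>. \<beta> \<in> RB \<Longrightarrow> t \<in> B \<beta> \<Longrightarrow> s \<in> B \<beta> \<Longrightarrow> upper_end (A \<alpha>) \<subseteq> upper_end (B \<beta>)"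
  shows "eA \<alpha> s \<in> span ((\<lambda>\<beta>. eB \<beta> s) ` bars_through upper_end RB B (upper_end (A \<alpha>)) t)"
proof -
  define T where "T = {\<beta>\<in>RB. t \<in> B \<beta> \<and> s \<in> B \<beta>}"
  have "eA \<alpha> s = f t s (eA \<alpha> t)"
    using X.structure_map_basis[OF \<alpha>(1) \<alpha>(4) \<alpha>(2)] \<alpha>(3) by simp
  also have "\<dots> \<in> span ((\<lambda>\<beta>. eB \<beta> s) ` T)"
    unfolding T_def using Y.structure_map_mem_span[OF \<alpha>(4)] X.basis_mem[OF \<alpha>(1,2)] submodule by blast
  finally have x: "eA \<alpha> s \<in> span ((\<lambda>\<beta>. eB \<beta> s) ` T)" .
  have killed: "f s u (eA \<alpha> s) = 0" if "s \<le> u" "u \<notin> upper_end (A \<alpha>)" for u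
    using X.structure_map_basis[OF \<alpha>(1) that(1) \<alpha>(3)] that(2) subset_upper_end[of "A \<alpha>"] by auto
  have "eA \<alpha> s \<in> span ((\<lambda>\<beta>. eB \<beta> s) ` {\<beta>\<in>T. upper_end (B \<beta>) = upper_end (A \<alpha>)})"
    by (rule Y.mem_span_bars_with_upper_end[OF _ _ x killed])
      (use reach \<alpha>(3) subset_upper_end in \<open>auto simp: T_def\<close>)
  moreover have "{\<beta>\<in>T. upper_end (B \<beta>) = upper_end (A \<alpha>)} \<subseteq> bars_through upper_end RB B (upper_end (A \<alpha>)) t"
    unfolding T_def bars_through_def by auto
  ultimately show ?thesis
    using subsetD[OF span_mono[OF image_mono]] by blast
qed

text \<open>Choose s beyond t, inside E, and outside every B-bar through t whose upper end does not
  reach E. Then the A-bars through t with upper end E are alive at s, and their basis vectors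
  there are independent and lie in the span of the B-bars through t with upper end E.\<close>
lemma card_bars_through_upper_end_le:
  "card (bars_through upper_end RA A E t) \<le> card (bars_through upper_end RB B E t)"
proof (cases "bars_through upper_end RA A E t = {}")
  case True
  then show ?thesis by simp
next
  case False
  let ?SA = "bars_through upper_end RA A E t" and ?SB = "bars_through upper_end RB B E t"
  obtain \<alpha>0 where "\<alpha>0 \<in> RA" "upper_end (A \<alpha>0) = E" "t \<in> A \<alpha>0"
    using False unfolding bars_through_def by auto
  then have tE: "t \<in> E"
    using subset_upper_end by blast
  define short where "short = {\<beta>\<in>RB. t \<in> B \<beta> \<and> \<not> E \<subseteq> upper_end (B \<beta>)}"
  have "finite short"
    by (rule finite_subset[OF _ Y.finite_bars_at[of t]]) (auto simp: short_def)
  then have "\<exists>s\<in>E. t \<le> s \<and> (\<forall>\<beta>\<in>short. s \<notin> upper_end (B \<beta>))"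
    by (rule exists_above_outside_upper_ends[OF _ tE]) (simp add: short_def)
  then obtain s where s: "s \<in> E" "t \<le> s" "\<forall>\<beta>\<in>short. s \<notin> upper_end (B \<beta>)"
    by blast
  have reach: "E \<subseteq> upper_end (B \<beta>)" if "\<beta> \<in> RB" "t \<in> B \<beta>" "s \<in> B \<beta>" for \<beta>
    using that s(3) subset_upper_end unfolding short_def by blast
  have sA: "s \<in> A \<alpha>" and \<alpha>: "\<alpha> \<in> RA" "t \<in> A \<alpha>" "upper_end (A \<alpha>) = E" if "\<alpha> \<in> ?SA" for \<alpha>
    using that interval_upper_end_mem[OF X.interval_bar _ s(2)] s(1) unfolding bars_through_def by auto
  have "eA \<alpha> s \<in> span ((\<lambda>\<beta>. eB \<beta> s) ` ?SB)" if "\<alpha> \<in> ?SA" for \<alpha>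
  proof -
    note \<alpha> = \<alpha>[OF that]
    have "upper_end (A \<alpha>) \<subseteq> upper_end (B \<beta>)" if "\<beta> \<in> RB" "t \<in> B \<beta>" "s \<in> B \<beta>" for \<beta>
      using reach[OF that] \<alpha>(3) by simp
    from basis_mem_span_same_upper_end[OF \<alpha>(1,2) sA[OF \<open>\<alpha> \<in> ?SA\<close>] s(2) this]
    show ?thesis
      unfolding \<alpha>(3) .
  qed
  then have "(\<lambda>\<alpha>. eA \<alpha> s) ` ?SA \<subseteq> span ((\<lambda>\<beta>. eB \<beta> s) ` ?SB)"
    by blast
  moreover have "?SA \<subseteq> {\<alpha>\<in>RA. s \<in> A \<alpha>}"
    using sA \<alpha> by blast
  ultimately have "card ?SA \<le> card ((\<lambda>\<beta>. eB \<beta> s) ` ?SB)"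
    by (intro X.card_le_of_basis_subset_span finite_imageI Y.finite_bars_through)
  also have "\<dots> \<le> card ?SB"
    using card_image_le[OF Y.finite_bars_through] .
  finally show ?thesis .
qed

end

locale barcode_image =
  X: barcode_basis scX X f RA A eA + Y: barcode_basis scY Y g RB B eB
  for scX :: "'k::field \<Rightarrow> 'v::ab_group_add \<Rightarrow> 'v" and X :: "'t::linorder \<Rightarrow> 'v set"
    and f and RA :: "'a set" and A and eA
    and scY :: "'k \<Rightarrow> 'w::ab_group_add \<Rightarrow> 'w" and Y and g and RB :: "'b set" and B and eB +
  fixes h :: "'t \<Rightarrow> 'v \<Rightarrow> 'w"
  assumes image: "Y t = h t ` X t"
    and linear_on_map: "linear_on scX scY (X t) (h t)"
    and natural: "s \<le> t \<Longrightarrow> x \<in> X s \<Longrightarrow> h t (f s t x) = g s t (h s x)"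
begin

lemma image_basis_mem_span:
  assumes \<alpha>: "\<alpha> \<in> RA" and q: "q \<in> A \<alpha>" "q \<le> t" and t: "t \<in> A \<alpha>"
  shows "h t (eA \<alpha> t) \<in> Y.span ((\<lambda>\<beta>. eB \<beta> t) ` {\<beta>\<in>RB. q \<in> B \<beta> \<and> t \<in> B \<beta>})"
proof -
  have "h t (eA \<alpha> t) = h t (f q t (eA \<alpha> q))"
    using X.structure_map_basis[OF \<alpha> q(2) q(1)] t by simp
  also have "\<dots> = g q t (h q (eA \<alpha> q))"
    using natural[OF q(2) X.basis_mem[OF \<alpha> q(1)]] .
  finally show ?thesis
    using Y.structure_map_mem_span[OF q(2)] X.basis_mem[OF \<alpha> q(1)] image[of q] by simp
qed

lemma basis_mem_span_image:
  assumes \<beta>: "\<beta> \<in> RB" and s: "s \<in> B \<beta>" "s \<le> t" and t: "t \<in> B \<beta>"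
  shows "eB \<beta> t \<in> Y.span (h t ` (\<lambda>\<alpha>. eA \<alpha> t) ` {\<alpha>\<in>RA. s \<in> A \<alpha> \<and> t \<in> A \<alpha>})"
proof -
  let ?S = "{\<alpha>\<in>RA. s \<in> A \<alpha> \<and> t \<in> A \<alpha>}"
  obtain x where x: "x \<in> X s" "eB \<beta> s = h s x"
    using Y.basis_mem[OF \<beta> s(1)] image[of s] by auto
  have "eB \<beta> t = g s t (h s x)"
    using Y.structure_map_basis[OF \<beta> s(2) s(1)] t x(2) by simp
  also have "\<dots> = h t (f s t x)"
    using natural[OF s(2) x(1)] by simp
  finally have eB: "eB \<beta> t = h t (f s t x)" .
  have "X.span ((\<lambda>\<alpha>. eA \<alpha> t) ` ?S) \<subseteq> X t"
    using X.span_mono[of "(\<lambda>\<alpha>. eA \<alpha> t) ` ?S" "(\<lambda>\<alpha>. eA \<alpha> t) ` {\<alpha>\<in>RA. t \<in> A \<alpha>}"] X.span_basis[of t]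
    by auto
  then have "linear_on scX scY (X.span ((\<lambda>\<alpha>. eA \<alpha> t) ` ?S)) (h t)"
    by (rule linear_on_subset[OF linear_on_map])
  moreover have "f s t x \<in> X.span ((\<lambda>\<alpha>. eA \<alpha> t) ` ?S)"
    using X.structure_map_mem_span[OF s(2) x(1)] .
  ultimately show ?thesis
    unfolding eB by (rule linear_on_span_image[OF X.vector_space Y.vector_space])
qed

lemma image_basis_mem_span_lower_end:
  assumes \<alpha>: "\<alpha> \<in> RA" "t \<in> A \<alpha>" and t: "t \<in> lower_end J" and late: "lower_end J \<subseteq> lower_end (A \<alpha>)"
  shows "h t (eA \<alpha> t) \<in> Y.span (h t ` (\<lambda>\<alpha>. eA \<alpha> t) ` bars_through lower_end RA A (lower_end J) t \<union>
      (\<lambda>\<beta>. eB \<beta> t) ` {\<beta>\<in>RB. t \<in> B \<beta> \<and> \<not> lower_end (B \<beta>) \<subseteq> lower_end J})"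
    (is "_ \<in> Y.span (?same \<union> ?earlier)")
proof (cases "lower_end (A \<alpha>) \<subseteq> lower_end J")
  case True
  then have "h t (eA \<alpha> t) \<in> ?same"
    using \<alpha> late unfolding bars_through_def by auto
  then show ?thesis
    by (intro Y.span_base UnI1)
next
  case False
  then obtain q where q: "q \<in> lower_end (A \<alpha>)" "q \<notin> lower_end J"
    by blast
  have qt: "q \<le> t"
    using lower_end_upward[OF t, of q] q(2) le_cases[of q t] by blast
  then have "q \<in> A \<alpha>"
    using interval_lower_end_mem[OF X.interval_bar[OF \<alpha>(1)] \<alpha>(2) _ q(1)] by blast
  then have "h t (eA \<alpha> t) \<in> Y.span ((\<lambda>\<beta>. eB \<beta> t) ` {\<beta>\<in>RB. q \<in> B \<beta> \<and> t \<in> B \<beta>})"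
    using image_basis_mem_span[OF \<alpha>(1) _ qt \<alpha>(2)] by blast
  moreover have "(\<lambda>\<beta>. eB \<beta> t) ` {\<beta>\<in>RB. q \<in> B \<beta> \<and> t \<in> B \<beta>} \<subseteq> ?same \<union> ?earlier"
    using q(2) subset_lower_end by blast
  ultimately show ?thesis
    using subsetD[OF Y.span_mono] by blast
qed

text \<open>Every B-bar through t with lower end L is alive at s, so its basis vector at t is the image
  under h of a vector transported from s, which lies in the span of the A-bars alive on [s, t].
  Those among them whose lower end is not L are born before L, and h maps them into the span of
  the B-bars through t born before L; adding these B-bars on both sides gives the count.\<close>
lemma card_bars_through_lower_end_le:
  "card (bars_through lower_end RB B L t) \<le> card (bars_through lower_end RA A L t)"
proof (cases "bars_through lower_end RB B L t = {}")
  case True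
  then show ?thesis by simp
next
  case False
  let ?SA = "bars_through lower_end RA A L t" and ?SB = "bars_through lower_end RB B L t"
  obtain \<beta>0 where "\<beta>0 \<in> RB" "lower_end (B \<beta>0) = L" "t \<in> B \<beta>0"
    using False unfolding bars_through_def by auto
  then have L: "L = lower_end (B \<beta>0)" and tL: "t \<in> L"
    using subset_lower_end by blast+
  define short where "short = {\<alpha>\<in>RA. t \<in> A \<alpha> \<and> \<not> L \<subseteq> lower_end (A \<alpha>)}"
  have "finite short"
    by (rule finite_subset[OF _ X.finite_bars_at[of t]]) (auto simp: short_def)
  then have "\<exists>s\<in>L. s \<le> t \<and> (\<forall>\<alpha>\<in>short. s \<notin> lower_end (A \<alpha>))"
    by (rule exists_below_outside_lower_ends[OF _ tL]) (simp add: short_def)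
  then obtain s where s: "s \<in> L" "s \<le> t" "\<forall>\<alpha>\<in>short. s \<notin> lower_end (A \<alpha>)"
    by blast
  define early where "early = {\<beta>\<in>RB. t \<in> B \<beta> \<and> \<not> lower_end (B \<beta>) \<subseteq> L}"
  define SP where "SP = h t ` (\<lambda>\<alpha>. eA \<alpha> t) ` ?SA \<union> (\<lambda>\<beta>. eB \<beta> t) ` early"
  have "h t (eA \<alpha> t) \<in> Y.span SP" if \<alpha>: "\<alpha> \<in> RA" "s \<in> A \<alpha>" "t \<in> A \<alpha>" for \<alpha>
  proof -
    have "\<alpha> \<notin> short"
      using s(3) \<alpha>(2) subset_lower_end by blast
    then have "lower_end (B \<beta>0) \<subseteq> lower_end (A \<alpha>)"
      using \<alpha>(1,3) L unfolding short_def by auto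
    from image_basis_mem_span_lower_end[OF \<alpha>(1,3) tL[unfolded L] this]
    show ?thesis
      unfolding SP_def early_def L .
  qed
  then have "Y.span (h t ` (\<lambda>\<alpha>. eA \<alpha> t) ` {\<alpha>\<in>RA. s \<in> A \<alpha> \<and> t \<in> A \<alpha>}) \<subseteq> Y.span SP"
    by (intro Y.span_minimal[OF _ Y.subspace_span]) auto
  moreover have "eB \<beta> t \<in> Y.span (h t ` (\<lambda>\<alpha>. eA \<alpha> t) ` {\<alpha>\<in>RA. s \<in> A \<alpha> \<and> t \<in> A \<alpha>})"
    if "\<beta> \<in> ?SB" for \<beta>
  proof -
    have "\<beta> \<in> RB" "t \<in> B \<beta>" "s \<in> lower_end (B \<beta>)"
      using that s(1) unfolding bars_through_def by auto
    then show ?thesis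
      using basis_mem_span_image interval_lower_end_mem[OF Y.interval_bar _ s(2)] s(2) by blast
  qed
  ultimately have SB_SP: "(\<lambda>\<beta>. eB \<beta> t) ` ?SB \<subseteq> Y.span SP"
    by blast
  have fin: "finite ?SA"
    by (rule X.finite_bars_through)
  have "card ?SB \<le> card (h t ` (\<lambda>\<alpha>. eA \<alpha> t) ` ?SA)"
    by (rule Y.card_le_of_basis_subset_span_Un[OF _ _ _ SB_SP[unfolded SP_def]
          finite_imageI[OF finite_imageI[OF fin]]])
      (auto simp: bars_through_def early_def)
  also have "\<dots> \<le> card ?SA"
    using card_image_le[OF finite_imageI[OF fin], of "h t" "\<lambda>\<alpha>. eA \<alpha> t"] card_image_le[OF fin]
    by (meson le_trans)
  finally show ?thesis .
qed

end

section \<open>Induced matchings\<close>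

lemma decreasing_enum_rank_le_imp_superset:
  assumes "decreasing_enum I S r" "\<alpha> \<in> S" "\<beta> \<in> S" "r \<alpha> \<le> r \<beta>" "I \<alpha> \<subseteq> I \<beta> \<or> I \<beta> \<subseteq> I \<alpha>"
  shows "I \<beta> \<subseteq> I \<alpha>"
proof (rule ccontr)
  assume "\<not> I \<beta> \<subseteq> I \<alpha>"
  then have "I \<alpha> \<subset> I \<beta>"
    using assms(5) by blast
  then have "r \<beta> < r \<alpha>"
    using assms(1-3) unfolding decreasing_enum_def by blast
  then show False
    using assms(4) by simp
qed

lemma decreasing_enum_rank_exists:
  assumes "decreasing_enum I S r" "\<beta> \<in> S" "k \<le> r \<beta>"
  shows "\<exists>\<alpha>\<in>S. r \<alpha> = k"
proof (cases "k = r \<beta>")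
  case True
  then show ?thesis
    using assms(2) by blast
next
  case False
  then have "k \<in> r ` S"
    using assms unfolding decreasing_enum_def by simp
  then show ?thesis
    by (metis imageE)
qed

lemma decreasing_enum_card_rank_le:
  assumes "decreasing_enum I S r" "\<beta> \<in> S"
  shows "card {\<alpha>\<in>S. r \<alpha> \<le> r \<beta>} = Suc (r \<beta>)"
proof -
  have "r ` {\<alpha>\<in>S. r \<alpha> \<le> r \<beta>} = {..r \<beta>}"
  proof
    show "{..r \<beta>} \<subseteq> r ` {\<alpha>\<in>S. r \<alpha> \<le> r \<beta>}"
    proof
      fix k assume "k \<in> {..r \<beta>}"
      then obtain \<alpha> where "\<alpha> \<in> S" "r \<alpha> = k"
        using decreasing_enum_rank_exists[OF assms] by auto
      with \<open>k \<in> {..r \<beta>}\<close> show "k \<in> r ` {\<alpha>\<in>S. r \<alpha> \<le> r \<beta>}"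
        by auto
    qed
  qed auto
  moreover have "inj_on r S"
    using assms(1) unfolding decreasing_enum_def by (rule conjunct1)
  then have "inj_on r {\<alpha>\<in>S. r \<alpha> \<le> r \<beta>}"
    by (rule inj_on_subset) auto
  ultimately show ?thesis
    using card_image[of r "{\<alpha>\<in>S. r \<alpha> \<le> r \<beta>}"] by simp
qed

text \<open>The bars of A ranked up to a within its group all contain A a, hence t; the counting
  hypothesis then forces a bar of B of rank at least that of a to contain t, and the bar of
  B of exactly that rank is even larger.\<close>
lemma decreasing_enum_partner:
  fixes endp :: "'t set \<Rightarrow> 't set"
  assumes rA: "decreasing_enum A {a\<in>RA. endp (A a) = E} rA"
    and rB: "decreasing_enum B {b\<in>RB. endp (B b) = E} rB"
    and nestA: "\<And>a a'. a \<in> RA \<Longrightarrow> a' \<in> RA \<Longrightarrow> endp (A a) = endp (A a') \<Longrightarrow> A a \<subseteq> A a' \<or> A a' \<subseteq> A a"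
    and nestB: "\<And>b b'. b \<in> RB \<Longrightarrow> b' \<in> RB \<Longrightarrow> endp (B b) = endp (B b') \<Longrightarrow> B b \<subseteq> B b' \<or> B b' \<subseteq> B b"
    and finA: "finite (bars_through endp RA A E t)"
    and count: "card (bars_through endp RA A E t) \<le> card (bars_through endp RB B E t)"
    and a: "a \<in> RA" "endp (A a) = E" "t \<in> A a"
  shows "\<exists>b\<in>RB. endp (B b) = E \<and> rB b = rA a \<and> t \<in> B b"
proof -
  let ?GA = "{a\<in>RA. endp (A a) = E}" and ?GB = "{b\<in>RB. endp (B b) = E}"
  have aG: "a \<in> ?GA"
    using a by simp
  have "{\<alpha>\<in>?GA. rA \<alpha> \<le> rA a} \<subseteq> bars_through endp RA A E t"
  proof
    fix \<alpha> assume \<alpha>: "\<alpha> \<in> {\<alpha>\<in>?GA. rA \<alpha> \<le> rA a}"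
    then have "\<alpha> \<in> ?GA" "rA \<alpha> \<le> rA a" "A \<alpha> \<subseteq> A a \<or> A a \<subseteq> A \<alpha>"
      using nestA[of \<alpha> a] a by auto
    then have "A a \<subseteq> A \<alpha>"
      by (rule decreasing_enum_rank_le_imp_superset[OF rA _ aG])
    then show "\<alpha> \<in> bars_through endp RA A E t"
      using \<alpha> a(3) unfolding bars_through_def by auto
  qed
  then have "card {\<alpha>\<in>?GA. rA \<alpha> \<le> rA a} \<le> card (bars_through endp RA A E t)"
    by (rule card_mono[OF finA])
  then have "Suc (rA a) \<le> card (bars_through endp RA A E t)"
    unfolding decreasing_enum_card_rank_le[OF rA aG] .
  then have ge: "Suc (rA a) \<le> card (bars_through endp RB B E t)"
    using count by simp
  have "\<exists>\<beta>\<in>bars_through endp RB B E t. rA a \<le> rB \<beta>"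
  proof (rule ccontr)
    assume "\<not> ?thesis"
    then have "rB ` bars_through endp RB B E t \<subseteq> {..<rA a}"
      by auto
    moreover have "inj_on rB ?GB"
      using rB unfolding decreasing_enum_def by (rule conjunct1)
    then have "inj_on rB (bars_through endp RB B E t)"
      by (rule inj_on_subset) (auto simp: bars_through_def)
    ultimately have "card (bars_through endp RB B E t) \<le> rA a"
      using card_inj_on_le[of rB _ "{..<rA a}"] by simp
    then show False
      using ge by simp
  qed
  then obtain \<beta> where \<beta>: "\<beta> \<in> ?GB" "t \<in> B \<beta>" "rA a \<le> rB \<beta>"
    unfolding bars_through_def by auto
  then obtain b where b: "b \<in> ?GB" "rB b = rA a"
    using decreasing_enum_rank_exists[OF rB \<beta>(1) \<beta>(3)] by blast
  then have "B \<beta> \<subseteq> B b"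
    using decreasing_enum_rank_le_imp_superset[OF rB b(1) \<beta>(1)] nestB[of b \<beta>] \<beta>(1,3) by simp
  then show ?thesis
    using b \<beta>(2) by auto
qed

lemma grouped_matching_subset: "grouped_matching endp RA A RB B M \<Longrightarrow> M \<subseteq> RA \<times> RB"
  unfolding grouped_matching_def by blast

lemma grouped_matching_converse:
  assumes "grouped_matching endp RA A RB B M"
  shows "grouped_matching endp RB B RA A (converse M)"
proof -
  obtain rA rB where
    "\<forall>E. decreasing_enum A {a\<in>RA. endp (A a) = E} rA \<and> decreasing_enum B {b\<in>RB. endp (B b) = E} rB"
    and "M = {(a, b). a \<in> RA \<and> b \<in> RB \<and> endp (A a) = endp (B b) \<and> rA a = rB b}"
    using assms unfolding grouped_matching_def by blast
  then show ?thesis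
    unfolding grouped_matching_def by (intro exI[of _ rB] exI[of _ rA]) auto
qed

lemma grouped_matching_functional:
  assumes M: "grouped_matching endp RA A RB B M" and "(a, b) \<in> M" "(a, b') \<in> M"
  shows "b = b'"
proof -
  obtain rA rB where
    rB: "\<And>E. decreasing_enum B {b\<in>RB. endp (B b) = E} rB" and
    M_eq: "M = {(a, b). a \<in> RA \<and> b \<in> RB \<and> endp (A a) = endp (B b) \<and> rA a = rB b}"
    using M unfolding grouped_matching_def by blast
  have "inj_on rB {b\<in>RB. endp (B b) = endp (A a)}"
    using rB unfolding decreasing_enum_def by (rule conjunct1)
  moreover have "b \<in> {b\<in>RB. endp (B b) = endp (A a)}" "b' \<in> {b\<in>RB. endp (B b) = endp (A a)}"
    "rB b = rB b'"
    using assms(2,3) unfolding M_eq by auto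
  ultimately show ?thesis
    by (auto dest: inj_onD)
qed

lemma grouped_matching_partner:
  fixes endp :: "'t set \<Rightarrow> 't set"
  assumes M: "grouped_matching endp RA A RB B M"
    and nestA: "\<And>a a'. a \<in> RA \<Longrightarrow> a' \<in> RA \<Longrightarrow> endp (A a) = endp (A a') \<Longrightarrow> A a \<subseteq> A a' \<or> A a' \<subseteq> A a"
    and nestB: "\<And>b b'. b \<in> RB \<Longrightarrow> b' \<in> RB \<Longrightarrow> endp (B b) = endp (B b') \<Longrightarrow> B b \<subseteq> B b' \<or> B b' \<subseteq> B b"
    and finA: "\<And>E t. finite (bars_through endp RA A E t)"
    and count: "\<And>E t. card (bars_through endp RA A E t) \<le> card (bars_through endp RB B E t)"
    and a: "a \<in> RA" "t \<in> A a"
  shows "\<exists>b. (a, b) \<in> M \<and> t \<in> B b"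
proof -
  obtain rA rB where
    rA: "\<And>E. decreasing_enum A {a\<in>RA. endp (A a) = E} rA" and
    rB: "\<And>E. decreasing_enum B {b\<in>RB. endp (B b) = E} rB" and
    M_eq: "M = {(a, b). a \<in> RA \<and> b \<in> RB \<and> endp (A a) = endp (B b) \<and> rA a = rB b}"
    using M unfolding grouped_matching_def by blast
  obtain b where "b \<in> RB" "endp (B b) = endp (A a)" "rB b = rA a" "t \<in> B b"
    using decreasing_enum_partner[OF rA rB nestA nestB finA count a(1) refl a(2)] by blast
  then show ?thesis
    unfolding M_eq using a(1) by auto
qed

lemma grouped_matching_injective_sub_barcode:
  fixes endp :: "'t set \<Rightarrow> 't set"
  assumes M: "grouped_matching endp RA A RB B M"
    and nestA: "\<And>a a'. a \<in> RA \<Longrightarrow> a' \<in> RA \<Longrightarrow> endp (A a) = endp (A a') \<Longrightarrow> A a \<subseteq> A a' \<or> A a' \<subseteq> A a"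
    and nestB: "\<And>b b'. b \<in> RB \<Longrightarrow> b' \<in> RB \<Longrightarrow> endp (B b) = endp (B b') \<Longrightarrow> B b \<subseteq> B b' \<or> B b' \<subseteq> B b"
    and finA: "\<And>E t. finite (bars_through endp RA A E t)"
    and count: "\<And>E t. card (bars_through endp RA A E t) \<le> card (bars_through endp RB B E t)"
    and nonempty: "\<And>a. a \<in> RA \<Longrightarrow> A a \<noteq> {}"
  shows "injective_matching RA A RB B M \<and> sub_barcode_matching RA A RB B M"
proof -
  have partner: "\<exists>b. (a, b) \<in> M \<and> t \<in> B b" if "a \<in> RA" "t \<in> A a" for a t
    using grouped_matching_partner[OF M nestA nestB finA count that] by blast
  note functional = grouped_matching_functional[OF M]
  have injective: "a = a'" if "(a, b) \<in> M" "(a', b) \<in> M" for a a' b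
    using grouped_matching_functional[OF grouped_matching_converse[OF M]] that by blast
  have RA: "a \<in> RA" if "(a, b) \<in> M" for a b
    using grouped_matching_subset[OF M] that by blast
  have sub: "A a \<subseteq> B b" if ab: "(a, b) \<in> M" for a b
  proof
    fix t assume "t \<in> A a"
    then obtain b' where "(a, b') \<in> M" "t \<in> B b'"
      using partner[OF RA[OF ab]] by blast
    then show "t \<in> B b"
      using functional[OF ab] by simp
  qed
  have total: "\<exists>b. (a, b) \<in> M" if a: "a \<in> RA" for a
  proof -
    obtain t where "t \<in> A a"
      using nonempty[OF a] by blast
    then show ?thesis
      using partner[OF a] by blast
  qed
  have "A a \<inter> B b \<noteq> {}" if "(a, b) \<in> M" for a b
    using sub[OF that] nonempty[OF RA[OF that]] by blast
  then have "barcode_matching RA A RB B M"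
    unfolding barcode_matching_def using grouped_matching_subset[OF M] functional injective by blast
  then show ?thesis
    unfolding injective_matching_def sub_barcode_matching_def using total sub by blast
qed

lemma comp_match_injective_sub_barcode:
  assumes M: "injective_matching RA A RB B M \<and> sub_barcode_matching RA A RB B M"
    and N: "injective_matching RB B RC C N \<and> sub_barcode_matching RB B RC C N"
    and nonempty: "\<And>a. a \<in> RA \<Longrightarrow> A a \<noteq> {}"
  shows "injective_matching RA A RC C (comp_match A C M N) \<and> sub_barcode_matching RA A RC C (comp_match A C M N)"
proof -
  have MRB: "M \<subseteq> RA \<times> RB" and Mfun: "\<And>a b b'. (a, b) \<in> M \<Longrightarrow> (a, b') \<in> M \<Longrightarrow> b = b'"
    and Minj: "\<And>a a' b. (a, b) \<in> M \<Longrightarrow> (a', b) \<in> M \<Longrightarrow> a = a'"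
    and Mtot: "\<And>a. a \<in> RA \<Longrightarrow> \<exists>b. (a, b) \<in> M" and Msub: "\<And>a b. (a, b) \<in> M \<Longrightarrow> A a \<subseteq> B b"
    using M unfolding injective_matching_def sub_barcode_matching_def barcode_matching_def by blast+
  have NRC: "N \<subseteq> RB \<times> RC" and Nfun: "\<And>a b b'. (a, b) \<in> N \<Longrightarrow> (a, b') \<in> N \<Longrightarrow> b = b'"
    and Ninj: "\<And>a a' b. (a, b) \<in> N \<Longrightarrow> (a', b) \<in> N \<Longrightarrow> a = a'"
    and Ntot: "\<And>a. a \<in> RB \<Longrightarrow> \<exists>b. (a, b) \<in> N" and Nsub: "\<And>a b. (a, b) \<in> N \<Longrightarrow> B a \<subseteq> C b"
    using N unfolding injective_matching_def sub_barcode_matching_def barcode_matching_def by blast+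
  let ?K = "comp_match A C M N"
  have K: "(a, c) \<in> ?K \<longleftrightarrow> (\<exists>b. (a, b) \<in> M \<and> (b, c) \<in> N \<and> A a \<inter> C c \<noteq> {})" for a c
    unfolding comp_match_def by simp
  have "?K \<subseteq> RA \<times> RC"
    using MRB NRC unfolding comp_match_def by blast
  moreover have "\<forall>a c c'. (a, c) \<in> ?K \<longrightarrow> (a, c') \<in> ?K \<longrightarrow> c = c'"
    using Mfun Nfun unfolding K by blast
  moreover have "\<forall>a a' c. (a, c) \<in> ?K \<longrightarrow> (a', c) \<in> ?K \<longrightarrow> a = a'"
    using Minj Ninj unfolding K by blast
  moreover have "\<forall>(a, c)\<in>?K. A a \<subseteq> C c"
    using Msub Nsub unfolding comp_match_def by blast
  moreover have "\<forall>a\<in>RA. \<exists>c. (a, c) \<in> ?K"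
  proof
    fix a assume a: "a \<in> RA"
    obtain b where ab: "(a, b) \<in> M"
      using Mtot[OF a] by blast
    then obtain c where bc: "(b, c) \<in> N"
      using Ntot MRB by blast
    then have "A a \<inter> C c \<noteq> {}"
      using Msub[OF ab] Nsub[OF bc] nonempty[OF a] by blast
    then show "\<exists>c. (a, c) \<in> ?K"
      using ab bc unfolding K by blast
  qed
  ultimately show ?thesis
    unfolding injective_matching_def sub_barcode_matching_def barcode_matching_def comp_match_def
    by blast
qed

lemma converse_comp_match:
  "converse (comp_match A C M N) = comp_match C A (converse N) (converse M)"
  unfolding comp_match_def by auto

lemma mono_induced_matching_injective_sub_barcode:
  assumes V: "pers_module sc V f" and pfd: "pfd sc V"
    and XY: "\<And>t. X t \<subseteq> Y t" and YV: "\<And>t. Y t \<subseteq> V t"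
    and barX: "is_barcode sc X f RA A" and barY: "is_barcode sc Y f RB B"
    and M: "mono_induced_matching RA A RB B M"
  shows "injective_matching RA A RB B M \<and> sub_barcode_matching RA A RB B M"
proof -
  obtain eA where X: "barcode_basis sc X f RA A eA"
    using is_barcode_obtains_basis[OF V pfd order_trans[OF XY YV] barX] .
  obtain eB where Y: "barcode_basis sc Y f RB B eB"
    using is_barcode_obtains_basis[OF V pfd YV barY] .
  interpret barcode_submodule sc X f RA A eA Y RB B eB
    by (intro barcode_submodule.intro[OF barcode_basis.vector_space[OF X] X Y]
        barcode_submodule_axioms.intro XY)
  have nestA: "A a \<subseteq> A a' \<or> A a' \<subseteq> A a"
    if "a \<in> RA" "a' \<in> RA" "upper_end (A a) = upper_end (A a')" for a a'
    using interval_upper_end_eq_nested[OF X.interval_bar[OF that(1)] X.interval_bar[OF that(2)] that(3)] .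
  have nestB: "B b \<subseteq> B b' \<or> B b' \<subseteq> B b"
    if "b \<in> RB" "b' \<in> RB" "upper_end (B b) = upper_end (B b')" for b b'
    using interval_upper_end_eq_nested[OF Y.interval_bar[OF that(1)] Y.interval_bar[OF that(2)] that(3)] .
  show ?thesis
    by (rule grouped_matching_injective_sub_barcode[OF M[unfolded mono_induced_matching_def]
          nestA nestB X.finite_bars_through card_bars_through_upper_end_le X.bar_nonempty])
qed

lemma epi_induced_matching_converse_injective_sub_barcode:
  assumes h: "pm_hom scV V f scW W g h" and pfdV: "pfd scV V" and pfdW: "pfd scW W"
    and XV: "\<And>t. X t \<subseteq> V t"
    and barX: "is_barcode scV X f RA A" and barY: "is_barcode scW (img h X) g RB B"
    and M: "epi_induced_matching RA A RB B M"
  shows "injective_matching RB B RA A (converse M) \<and> sub_barcode_matching RB B RA A (converse M)"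
proof -
  have YW: "img h X t \<subseteq> W t" for t
    using pm_homD(3)[OF h] XV unfolding img_def by blast
  obtain eA where X: "barcode_basis scV X f RA A eA"
    using is_barcode_obtains_basis[OF pm_homD(1)[OF h] pfdV XV barX] .
  obtain eB where Y: "barcode_basis scW (img h X) g RB B eB"
    using is_barcode_obtains_basis[OF pm_homD(2)[OF h] pfdW YW barY] .
  interpret barcode_image scV X f RA A eA scW "img h X" g RB B eB h
  proof (intro barcode_image.intro[OF X Y] barcode_image_axioms.intro)
    show "img h X t = h t ` X t" for t
      by (simp add: img_def)
    show "linear_on scV scW (X t) (h t)" for t
      using linear_on_subset[OF pm_homD(4)[OF h] XV] .
    show "h t (f s t x) = g s t (h s x)" if "s \<le> t" "x \<in> X s" for s t x
      using pm_homD(5)[OF h that(1)] that(2) XV by blast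
  qed
  have nestA: "A a \<subseteq> A a' \<or> A a' \<subseteq> A a"
    if "a \<in> RA" "a' \<in> RA" "lower_end (A a) = lower_end (A a')" for a a'
    using interval_lower_end_eq_nested[OF X.interval_bar[OF that(1)] X.interval_bar[OF that(2)] that(3)] .
  have nestB: "B b \<subseteq> B b' \<or> B b' \<subseteq> B b"
    if "b \<in> RB" "b' \<in> RB" "lower_end (B b) = lower_end (B b')" for b b'
    using interval_lower_end_eq_nested[OF Y.interval_bar[OF that(1)] Y.interval_bar[OF that(2)] that(3)] .
  show ?thesis
    by (rule grouped_matching_injective_sub_barcode[OF
          grouped_matching_converse[OF M[unfolded epi_induced_matching_def]]
          nestB nestA Y.finite_bars_through card_bars_through_lower_end_le Y.bar_nonempty])
qed

theorem lemma3p6: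
  fixes scU :: "'k::field \<Rightarrow> 'u::ab_group_add \<Rightarrow> 'u"
    and scV :: "'k \<Rightarrow> 'v::ab_group_add \<Rightarrow> 'v"
    and scT :: "'k \<Rightarrow> 'x::ab_group_add \<Rightarrow> 'x"
    and scW :: "'k \<Rightarrow> 'w::ab_group_add \<Rightarrow> 'w"
    and U :: "'t::linorder \<Rightarrow> 'u set" and fU :: "'t \<Rightarrow> 't \<Rightarrow> 'u \<Rightarrow> 'u"
    and V :: "'t \<Rightarrow> 'v set" and fV :: "'t \<Rightarrow> 't \<Rightarrow> 'v \<Rightarrow> 'v"
    and T' :: "'t \<Rightarrow> 'x set" and fT :: "'t \<Rightarrow> 't \<Rightarrow> 'x \<Rightarrow> 'x"
    and W :: "'t \<Rightarrow> 'w set" and fW :: "'t \<Rightarrow> 't \<Rightarrow> 'w \<Rightarrow> 'w"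
    and F :: "'t \<Rightarrow> 'u \<Rightarrow> 'v" and G :: "'t \<Rightarrow> 'x \<Rightarrow> 'w"
    and \<phi>1 :: "'t \<Rightarrow> 'x \<Rightarrow> 'u" and \<phi>2 :: "'t \<Rightarrow> 'v \<Rightarrow> 'w"
    and RG :: "'g set" and bG :: "'g \<Rightarrow> 't set"
    and RF :: "'f set" and bF :: "'f \<Rightarrow> 't set"
    and RP :: "'p set" and bP :: "'p \<Rightarrow> 't set"
    and RQ :: "'q set" and bQ :: "'q \<Rightarrow> 't set"
    and J_Fphi :: "('p \<times> 'f) set" and Q_phistar :: "('p \<times> 'g) set"
    and Q_phiF :: "('f \<times> 'q) set" and J_phistar :: "('g \<times> 'q) set"
  assumes pfd: "pfd scU U" "pfd scV V" "pfd scT T'" "pfd scW W"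
    and homF: "pm_hom scU U fU scV V fV F"
    and homG: "pm_hom scT T' fT scW W fW G"
    and hom\<phi>1: "pm_hom scT T' fT scU U fU \<phi>1"
    and hom\<phi>2: "pm_hom scV V fV scW W fW \<phi>2"
    and comp: "\<forall>t. \<forall>x\<in>T' t. G t x = \<phi>2 t (F t (\<phi>1 t x))"
    \<comment> \<open>barcodes of im G, im F, im F_\<phi> and im \<phi>_F\<close>
    and barG: "is_barcode scW (img G T') fW RG bG"
    and barF: "is_barcode scV (img F U) fV RF bF"
    and barP: "is_barcode scV (img F (img \<phi>1 T')) fV RP bP"
    and barQ: "is_barcode scW (img \<phi>2 (img F U)) fW RQ bQ"
    \<comment> \<open>the induced matchings J_{F_\<phi>}, Q_{\<phi>_*}, Q_{\<phi>_F}, J_{\<phi>_*}\<close>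
    and JFphi: "mono_induced_matching RP bP RF bF J_Fphi"
    and Qphistar: "epi_induced_matching RP bP RG bG Q_phistar"
    and QphiF: "epi_induced_matching RF bF RQ bQ Q_phiF"
    and Jphistar: "mono_induced_matching RG bG RQ bQ J_phistar"
  shows "injective_matching RG bG RF bF (comp_match bG bF (converse Q_phistar) J_Fphi) \<and>
         sub_barcode_matching RG bG RF bF (comp_match bG bF (converse Q_phistar) J_Fphi) \<and>
         injective_matching RG bG RF bF (converse (comp_match bF bG Q_phiF (converse J_phistar))) \<and>
         sub_barcode_matching RG bG RF bF (converse (comp_match bF bG Q_phiF (converse J_phistar)))"
proof -
  \<comment> \<open>All four barcodes are of submodules of V or W, so only \<open>pfd(2)\<close> and \<open>pfd(4)\<close> are used.\<close>
  note F_hom = pm_homD[OF homF] and \<phi>1_hom = pm_homD[OF hom\<phi>1] and \<phi>2_hom = pm_homD[OF hom\<phi>2]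
  let ?P = "img F (img \<phi>1 T')" and ?FU = "img F U" and ?Q = "img \<phi>2 (img F U)"
  have P_FU: "?P t \<subseteq> ?FU t" for t
    using \<phi>1_hom(3) unfolding img_def by blast
  have FU_V: "?FU t \<subseteq> V t" for t
    using F_hom(3) unfolding img_def by blast
  have img_G: "img G T' = img \<phi>2 ?P"
    using comp unfolding img_def image_image by (intro ext image_cong) auto
  have G_Q: "img G T' t \<subseteq> ?Q t" for t
    using P_FU unfolding img_G img_def by blast
  have Q_W: "?Q t \<subseteq> W t" for t
    using \<phi>2_hom(3) FU_V unfolding img_def by blast
  have J_Fphi: "injective_matching RP bP RF bF J_Fphi \<and> sub_barcode_matching RP bP RF bF J_Fphi"
    by (rule mono_induced_matching_injective_sub_barcode[OF F_hom(2) pfd(2) P_FU FU_V barP barF JFphi])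
  have Q_phistar: "injective_matching RG bG RP bP (converse Q_phistar) \<and>
      sub_barcode_matching RG bG RP bP (converse Q_phistar)"
    by (rule epi_induced_matching_converse_injective_sub_barcode[OF hom\<phi>2 pfd(2) pfd(4)
          order_trans[OF P_FU FU_V] barP barG[unfolded img_G] Qphistar])
  have Q_phiF: "injective_matching RQ bQ RF bF (converse Q_phiF) \<and>
      sub_barcode_matching RQ bQ RF bF (converse Q_phiF)"
    by (rule epi_induced_matching_converse_injective_sub_barcode[OF hom\<phi>2 pfd(2) pfd(4)
          FU_V barF barQ QphiF])
  have J_phistar: "injective_matching RG bG RQ bQ J_phistar \<and> sub_barcode_matching RG bG RQ bQ J_phistar"
    by (rule mono_induced_matching_injective_sub_barcode[OF \<phi>2_hom(2) pfd(4) G_Q Q_W barG barQ Jphistar])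
  note nonempty = is_barcode_bar_nonempty[OF barG]
  show ?thesis
    unfolding converse_comp_match converse_converse
    using comp_match_injective_sub_barcode[OF Q_phistar J_Fphi nonempty]
      comp_match_injective_sub_barcode[OF J_phistar Q_phiF nonempty] by blast
qed

end
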